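(* Let $n\ge m\ge0$, $\alpha=(\alpha_1\le\dots\le\alpha_n)$, $\beta=(\beta_1\le\dots\le\beta_m)$ rational numbers in $[0,1)$ with $\alpha_1=0$ and $(\alpha,\beta)$ non-resonant. Define $\theta(k)=(n-m)\alpha_k+\#\{i\mid\beta_i<\alpha_k\}+(n-k)-\sum_{i=1}^n\alpha_i+\sum_{j=1}^m\beta_j$ for $1\le k\le n$ and set $\theta(n+1)=\theta(1)$. Then for all $0\le r\le m$ and $1\le\ell\le s_{r+1}-s_r$, $$n+m-1-w(\omega_{r,\ell})=\theta(s_r+\ell).$$
   Context: Non-resonant: $\alpha_i-\beta_j\notin\mathbb{Z}$ for all $i,j$. $d$ a common denominator, $a_i=d\alpha_i$, $b_j=d\beta_j$. Set $s_0=1$, $s_r=\#\{i:\alpha_i<\beta_r\}$ for $1\le r\le m$, $s_{m+1}=n+1$. For $0\le r\le m$, $1\le\ell\le s_{r+1}-s_r$, let $\omega_{r,\ell}=g_{r,\ell}\,\frac{dx_2}{x_2}\wedge\cdots\wedge\frac{dx_n}{x_n}\wedge\frac{dy_1}{y_1}\wedge\cdots\wedge\frac{dy_m}{y_m}$ with $g_{r,\ell}=x_2^{a_2}\cdots x_{s_r+\ell-1}^{a_{s_r+\ell-1}}\cdot x_{s_r+\ell}^{a_{s_r+\ell}-d}\cdots x_n^{a_n-d}\cdot y_1^{d-b_1}\cdots y_r^{d-b_r}\cdot y_{r+1}^{2d-b_{r+1}}\cdots y_m^{2d-b_m}$. For $a\in\mathbb{C}^\times$, $f_a=\sum_{i=2}^nx_i^d-\sum_jy_j^d+a\prod_jy_j^d/\prod_{i\ge2}x_i^d$,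 and $\Delta(f_a)\subset\mathbb{R}^{n+m-1}$ is the convex hull of $0$ and the exponents of the monomials of $f_a$ (a monomial $\prod x_i^{u_i}\prod y_j^{v_j}$ corresponds to $(u_2,\dots,u_n,v_1,\dots,v_m)$); it does not depend on $a$. $w(\omega_{r,\ell})$ is the smallest positive real $w$ such that the exponent point of $g_{r,\ell}$ lies in $w\cdot\Delta(f_a)$. *)

theory Defs
  imports "HOL-Analysis.Analysis"
begin

text \<open>Points of the ambient space R^(n+m-1) are functions on coordinate labels:
  Inl i is the coordinate of x_i (2 \<le> i \<le> n), Inr j that of y_j (1 \<le> j \<le> m);
  all other labels carry the value 0.\<close>

type_synonym pt = "nat + nat \<Rightarrow> real"

definition conv_hull_pts :: "pt set \<Rightarrow> pt set" where
  "conv_hull_pts V = {p. \<exists>c. (\<forall>v\<in>V. 0 \<le> c v) \<and> sum c V = 1 \<and>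
                          p = (\<lambda>k. \<Sum>v\<in>V. c v * v k)}"

text \<open>Exponent vectors of the monomials of f_a:
  x_i^d (2\<le>i\<le>n), y_j^d (1\<le>j\<le>m), and prod y_j^d / prod_{i\<ge>2} x_i^d.\<close>
definition mono_x :: "nat \<Rightarrow> nat \<Rightarrow> pt" where
  "mono_x d i = (\<lambda>k. if k = Inl i then real d else 0)"

definition mono_y :: "nat \<Rightarrow> nat \<Rightarrow> pt" where
  "mono_y d j = (\<lambda>k. if k = Inr j then real d else 0)"

definition mono_last :: "nat \<Rightarrow> nat \<Rightarrow> nat \<Rightarrow> pt" where
  "mono_last n m d = (\<lambda>k. case k of
      Inl i \<Rightarrow> if 2 \<le> i \<and> i \<le> n then - real d else 0
    | Inr j \<Rightarrow> if 1 \<le> j \<and> j \<le> m then real d else 0)"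

definition Newton_Delta :: "nat \<Rightarrow> nat \<Rightarrow> nat \<Rightarrow> pt set" where
  "Newton_Delta n m d = conv_hull_pts
     ({(\<lambda>_. 0)} \<union> mono_x d ` {2..n} \<union> mono_y d ` {1..m} \<union> {mono_last n m d})"

definition s_idx :: "nat \<Rightarrow> nat \<Rightarrow> (nat \<Rightarrow> real) \<Rightarrow> (nat \<Rightarrow> real) \<Rightarrow> nat \<Rightarrow> nat" where
  "s_idx n m \<alpha> \<beta> r =
     (if r = 0 then 1 else if r = m + 1 then n + 1 else card {i\<in>{1..n}. \<alpha> i < \<beta> r})"

definition g_exp :: "nat \<Rightarrow> nat \<Rightarrow> (nat \<Rightarrow> real) \<Rightarrow> (nat \<Rightarrow> real) \<Rightarrow> nat \<Rightarrow> nat \<Rightarrow> nat \<Rightarrow> pt" where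
  "g_exp n m \<alpha> \<beta> d r l = (\<lambda>k. case k of
      Inl i \<Rightarrow> if 2 \<le> i \<and> i \<le> n then
                 (if i \<le> s_idx n m \<alpha> \<beta> r + l - 1 then real d * \<alpha> i else real d * \<alpha> i - real d)
               else 0
    | Inr j \<Rightarrow> if 1 \<le> j \<and> j \<le> m then
                 (if j \<le> r then real d - real d * \<beta> j else 2 * real d - real d * \<beta> j)
               else 0)"

definition weight :: "nat \<Rightarrow> nat \<Rightarrow> (nat \<Rightarrow> real) \<Rightarrow> (nat \<Rightarrow> real) \<Rightarrow> nat \<Rightarrow> nat \<Rightarrow> nat \<Rightarrow> real" where
  "weight n m \<alpha> \<beta> d r l = Inf {w::real. 0 < w \<and>
      (\<exists>q\<in>Newton_Delta n m d. g_exp n m \<alpha> \<beta> d r l = (\<lambda>k. w * q k))}"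

definition theta0 :: "nat \<Rightarrow> nat \<Rightarrow> (nat \<Rightarrow> real) \<Rightarrow> (nat \<Rightarrow> real) \<Rightarrow> nat \<Rightarrow> real" where
  "theta0 n m \<alpha> \<beta> k = (real n - real m) * \<alpha> k + real (card {i\<in>{1..m}. \<beta> i < \<alpha> k})
      + (real n - real k) - (\<Sum>i=1..n. \<alpha> i) + (\<Sum>j=1..m. \<beta> j)"

definition theta :: "nat \<Rightarrow> nat \<Rightarrow> (nat \<Rightarrow> real) \<Rightarrow> (nat \<Rightarrow> real) \<Rightarrow> nat \<Rightarrow> real" where
  "theta n m \<alpha> \<beta> k = (if k = n + 1 then theta0 n m \<alpha> \<beta> 1 else theta0 n m \<alpha> \<beta> k)"

end

theory Submission
  imports Defs
begin

(* Put t = s_r + l.  The point g is a nonnegative combination of the nonzero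
   vertices of Delta, the vertex of prod y^d / prod x^d getting the coefficient 1 - alpha_t
   (or 0 if t = n + 1); if W is the total coefficient, this exhibits g in W * Delta.
   Conversely the linear form  sum_i x_i + sum_j y_j - (n - m) x_t  is at most d on Delta and
   equals d on every vertex used with a positive coefficient, so g lies in w * Delta only for
   w >= W.  Hence w(omega_{r,l}) = W, and evaluating W is a count: since t lies between s_r and
   s_{r+1}, the beta_j below alpha_t are exactly beta_1, ..., beta_r. *)

lemma conv_hull_pts_sum_le_one:
  fixes V :: "pt set" and h :: "'i \<Rightarrow> pt"
  assumes "finite V" "(\<lambda>_. 0) \<in> V" "finite K" "h ` K \<subseteq> V"
    and "\<forall>k\<in>K. 0 \<le> c k" "sum c K \<le> 1"
  shows "(\<lambda>x. \<Sum>k\<in>K. c k * h k x) \<in> conv_hull_pts V"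
proof -
  define z :: pt where "z = (\<lambda>_. 0)"
  define \<gamma> where "\<gamma> v = sum c {k\<in>K. h k = v} + (if v = z then 1 - sum c K else 0)" for v
  have group: "(\<Sum>v\<in>V. sum f {k\<in>K. h k = v}) = sum f K" for f :: "'i \<Rightarrow> real"
    using sum.group[OF assms(3,1,4)] .
  have "\<forall>v\<in>V. 0 \<le> \<gamma> v"
    using assms(5,6) by (auto simp: \<gamma>_def intro!: sum_nonneg add_nonneg_nonneg)
  moreover have "sum \<gamma> V = 1"
    using assms(1,2) by (simp add: \<gamma>_def sum.distrib group z_def)
  moreover have "(\<Sum>v\<in>V. \<gamma> v * v x) = (\<Sum>k\<in>K. c k * h k x)" for x
  proof -
    have "(\<Sum>v\<in>V. \<gamma> v * v x) = (\<Sum>v\<in>V. \<Sum>k\<in>{k\<in>K. h k = v}. c k * h k x)"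
      by (auto simp: \<gamma>_def z_def distrib_right sum_distrib_right intro!: sum.cong)
    then show ?thesis
      by (simp only: group)
  qed
  ultimately show ?thesis
    unfolding conv_hull_pts_def by (intro CollectI exI[of _ \<gamma>]) auto
qed

lemma conv_hull_pts_linear_le:
  fixes V :: "pt set" and \<phi> :: "nat + nat \<Rightarrow> real"
  assumes "finite V" "q \<in> conv_hull_pts V" "\<forall>v\<in>V. (\<Sum>x\<in>X. \<phi> x * v x) \<le> B"
  shows "(\<Sum>x\<in>X. \<phi> x * q x) \<le> B"
proof -
  obtain c where c: "\<forall>v\<in>V. 0 \<le> c v" "sum c V = 1" "q = (\<lambda>x. \<Sum>v\<in>V. c v * v x)"
    using assms(2) unfolding conv_hull_pts_def by blast
  have "(\<Sum>x\<in>X. \<phi> x * q x) = (\<Sum>v\<in>V. c v * (\<Sum>x\<in>X. \<phi> x * v x))"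
    unfolding c(3) by (simp add: sum_distrib_left sum.swap[of _ X] algebra_simps)
  also have "\<dots> \<le> (\<Sum>v\<in>V. c v * B)"
    using c(1) assms(3) by (intro sum_mono mult_left_mono) auto
  also have "\<dots> = B"
    using c(2) by (simp add: sum_distrib_right[symmetric])
  finally show ?thesis .
qed

text \<open>Complementary slackness: if g decomposes along vertices on which a linear form attains its
  maximum B over all vertices, the total coefficient is the least scaling of the polytope
  containing g.\<close>

lemma scaled_conv_hull_pts_iff:
  fixes V :: "pt set" and h :: "'i \<Rightarrow> pt" and \<phi> :: "nat + nat \<Rightarrow> real"
  assumes V: "finite V" "(\<lambda>_. 0) \<in> V"
    and K: "finite K" "h ` K \<subseteq> V" "\<forall>k\<in>K. 0 \<le> \<mu> k"
    and dual: "0 < B" "\<forall>v\<in>V. (\<Sum>x\<in>X. \<phi> x * v x) \<le> B"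
    and slack: "\<forall>k\<in>K. \<mu> k = 0 \<or> (\<Sum>x\<in>X. \<phi> x * h k x) = B"
    and "0 < w"
  shows "(\<exists>q\<in>conv_hull_pts V. (\<lambda>x. \<Sum>k\<in>K. \<mu> k * h k x) = (\<lambda>x. w * q x)) \<longleftrightarrow> sum \<mu> K \<le> w"
proof
  define g where "g = (\<lambda>x. \<Sum>k\<in>K. \<mu> k * h k x)"
  assume "\<exists>q\<in>conv_hull_pts V. g = (\<lambda>x. w * q x)"
  then obtain q where "q \<in> conv_hull_pts V" and g: "g = (\<lambda>x. w * q x)"
    by blast
  have "B * sum \<mu> K = (\<Sum>k\<in>K. \<mu> k * B)"
    by (simp add: sum_distrib_left mult.commute)
  also have "\<dots> = (\<Sum>k\<in>K. \<mu> k * (\<Sum>x\<in>X. \<phi> x * h k x))"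
    using slack by (intro sum.cong) auto
  also have "\<dots> = (\<Sum>x\<in>X. \<phi> x * g x)"
    unfolding g_def by (simp add: sum_distrib_left sum.swap[of _ X] algebra_simps)
  also have "\<dots> = w * (\<Sum>x\<in>X. \<phi> x * q x)"
    by (simp add: g sum_distrib_left algebra_simps)
  also have "\<dots> \<le> w * B"
    using conv_hull_pts_linear_le[OF V(1) \<open>q \<in> _\<close> dual(2)] \<open>0 < w\<close> by simp
  finally show "sum \<mu> K \<le> w"
    using dual(1) by (simp add: mult.commute)
next
  assume "sum \<mu> K \<le> w"
  define q where "q = (\<lambda>x. \<Sum>k\<in>K. \<mu> k / w * h k x)"
  have "q \<in> conv_hull_pts V"
    unfolding q_def using K \<open>0 < w\<close> \<open>sum \<mu> K \<le> w\<close>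
    by (intro conv_hull_pts_sum_le_one[OF V K(1,2)]) (simp_all add: sum_divide_distrib[symmetric])
  moreover have "(\<lambda>x. \<Sum>k\<in>K. \<mu> k * h k x) = (\<lambda>x. w * q x)"
    using \<open>0 < w\<close> by (simp add: q_def sum_distrib_left)
  ultimately show "\<exists>q\<in>conv_hull_pts V. (\<lambda>x. \<Sum>k\<in>K. \<mu> k * h k x) = (\<lambda>x. w * q x)"
    by blast
qed

lemma Inf_pos_atLeast:
  fixes a :: real
  assumes "0 \<le> a"
  shows "Inf {w. 0 < w \<and> a \<le> w} = a"
proof (cases "a = 0")
  case True
  then have "{w. 0 < w \<and> a \<le> w} = {0<..}"
    by auto
  with True show ?thesis
    by simp
next
  case False
  with assms have "{w. 0 < w \<and> a \<le> w} = {a..}"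
    by auto
  then show ?thesis
    by simp
qed

lemma Inf_scaled_conv_hull_pts:
  fixes V :: "pt set" and h :: "'i \<Rightarrow> pt" and \<phi> :: "nat + nat \<Rightarrow> real"
  assumes V: "finite V" "(\<lambda>_. 0) \<in> V"
    and K: "finite K" "h ` K \<subseteq> V" "\<forall>k\<in>K. 0 \<le> \<mu> k"
    and dual: "0 < B" "\<forall>v\<in>V. (\<Sum>x\<in>X. \<phi> x * v x) \<le> B"
    and slack: "\<forall>k\<in>K. \<mu> k = 0 \<or> (\<Sum>x\<in>X. \<phi> x * h k x) = B"
  shows "Inf {w. 0 < w \<and> (\<exists>q\<in>conv_hull_pts V. (\<lambda>x. \<Sum>k\<in>K. \<mu> k * h k x) = (\<lambda>x. w * q x))}
    = sum \<mu> K"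
proof -
  have "{w. 0 < w \<and> (\<exists>q\<in>conv_hull_pts V. (\<lambda>x. \<Sum>k\<in>K. \<mu> k * h k x) = (\<lambda>x. w * q x))}
      = {w. 0 < w \<and> sum \<mu> K \<le> w}"
    using scaled_conv_hull_pts_iff[OF assms] by blast
  moreover have "0 \<le> sum \<mu> K"
    using K(3) by (simp add: sum_nonneg)
  ultimately show ?thesis
    by (simp add: Inf_pos_atLeast)
qed

lemma sum_mult_delta:
  "finite A \<Longrightarrow> (\<Sum>x\<in>A. f x * (if x = a then e else 0::'a::semiring_0)) = (if a \<in> A then f a * e else 0)"
  by (simp add: if_distrib[of "times _"] cong: if_cong)

lemma mono_on_less_iff_le_card:
  fixes a :: "nat \<Rightarrow> 'a::linorder"
  assumes mono: "mono_on {1..n} a" and k: "k \<in> {1..n}"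
  shows "a k < b \<longleftrightarrow> k \<le> card {i\<in>{1..n}. a i < b}"
proof
  assume "a k < b"
  have "{1..k} \<subseteq> {i\<in>{1..n}. a i < b}"
  proof
    fix i assume "i \<in> {1..k}"
    with k have "a i \<le> a k"
      by (intro mono_onD[OF mono]) auto
    with \<open>a k < b\<close> \<open>i \<in> {1..k}\<close> k show "i \<in> {i\<in>{1..n}. a i < b}"
      by auto
  qed
  from card_mono[OF _ this] show "k \<le> card {i\<in>{1..n}. a i < b}"
    by simp
next
  assume le_card: "k \<le> card {i\<in>{1..n}. a i < b}"
  show "a k < b"
  proof (rule ccontr)
    assume "\<not> a k < b"
    have "{i\<in>{1..n}. a i < b} \<subseteq> {1..k - 1}"
    proof
      fix i assume i: "i \<in> {i\<in>{1..n}. a i < b}"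
      have "\<not> k \<le> i"
      proof
        assume "k \<le> i"
        with i k have "a k \<le> a i"
          by (intro mono_onD[OF mono]) auto
        with i \<open>\<not> a k < b\<close> show False
          by auto
      qed
      with i show "i \<in> {1..k - 1}"
        by auto
    qed
    from card_mono[OF _ this] have "card {i\<in>{1..n}. a i < b} \<le> k - 1"
      by simp
    with le_card k show False
      by arith
  qed
qed

definition Newton_vertices :: "nat \<Rightarrow> nat \<Rightarrow> nat \<Rightarrow> pt set" where
  "Newton_vertices n m d = {(\<lambda>_. 0)} \<union> mono_x d ` {2..n} \<union> mono_y d ` {1..m} \<union> {mono_last n m d}"

lemma Newton_Delta_conv_hull_pts: "Newton_Delta n m d = conv_hull_pts (Newton_vertices n m d)"
  by (simp add: Newton_Delta_def Newton_vertices_def)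

text \<open>The nonzero vertices are indexed by Inl i (1 \<le> i \<le> n) and Inr j (1 \<le> j \<le> m): the exponent
  of prod y^d / prod x^d takes the index Inl 1, which x_2^d, ..., x_n^d leave free.\<close>

definition vertex :: "nat \<Rightarrow> nat \<Rightarrow> nat \<Rightarrow> nat + nat \<Rightarrow> pt" where
  "vertex n m d k =
    (case k of Inl i \<Rightarrow> if i = 1 then mono_last n m d else mono_x d i | Inr j \<Rightarrow> mono_y d j)"

lemma vertex_Inl_1: "vertex n m d (Inl 1) = mono_last n m d"
  and vertex_Inl: "i \<noteq> 1 \<Longrightarrow> vertex n m d (Inl i) = mono_x d i"
  and vertex_Inr: "vertex n m d (Inr j) = mono_y d j"
  by (simp_all add: vertex_def)

lemma vertex_in_Newton_vertices: "vertex n m d ` ({1..n} <+> {1..m}) \<subseteq> Newton_vertices n m d"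
  by (auto simp: vertex_def Newton_vertices_def)

lemma sum_vertex_Inl:
  "(\<Sum>k\<in>{1..n} <+> {1..m}. f k * vertex n m d k (Inl i))
    = (if i \<in> {2..n} then real d * (f (Inl i) - f (Inl 1)) else 0)"
proof -
  have "vertex n m d (Inl i') (Inl i)
      = (if i' = 1 then (if i \<in> {2..n} then - real d else 0) else 0)
        + (if i' = i then (if i = 1 then 0 else real d) else 0)" for i'
    by (auto simp: vertex_def mono_x_def mono_last_def)
  then show ?thesis
    by (auto simp: sum.Plus vertex_def mono_y_def sum.distrib sum_mult_delta algebra_simps)
qed

lemma sum_vertex_Inr:
  assumes "1 \<le> n"
  shows "(\<Sum>k\<in>{1..n} <+> {1..m}. f k * vertex n m d k (Inr j))
    = (if j \<in> {1..m} then real d * (f (Inr j) + f (Inl 1)) else 0)"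
proof -
  have "vertex n m d (Inl i) (Inr j) = (if i = 1 then (if j \<in> {1..m} then real d else 0) else 0)"
    and "vertex n m d (Inr j') (Inr j) = (if j' = j then real d else 0)" for i j'
    by (auto simp: vertex_def mono_x_def mono_y_def mono_last_def)
  with assms show ?thesis
    by (auto simp: sum.Plus sum_mult_delta algebra_simps)
qed

lemma coord_sum_mono_x:
  "(\<Sum>x\<in>{2..n} <+> {1..m}. \<phi> x * mono_x d i x) = (if i \<in> {2..n} then \<phi> (Inl i) * real d else 0)"
  by (auto simp: mono_x_def sum_mult_delta)

lemma coord_sum_mono_y:
  "(\<Sum>x\<in>{2..n} <+> {1..m}. \<phi> x * mono_y d j x) = (if j \<in> {1..m} then \<phi> (Inr j) * real d else 0)"
  by (auto simp: mono_y_def sum_mult_delta)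

lemma coord_sum_mono_last:
  "(\<Sum>x\<in>{2..n} <+> {1..m}. \<phi> x * mono_last n m d x)
    = real d * ((\<Sum>j=1..m. \<phi> (Inr j)) - (\<Sum>i=2..n. \<phi> (Inl i)))"
proof -
  have "(\<Sum>i=2..n. \<phi> (Inl i) * mono_last n m d (Inl i)) = (\<Sum>i=2..n. - real d * \<phi> (Inl i))"
    by (rule sum.cong) (auto simp: mono_last_def)
  moreover have "(\<Sum>j=1..m. \<phi> (Inr j) * mono_last n m d (Inr j)) = (\<Sum>j=1..m. real d * \<phi> (Inr j))"
    by (rule sum.cong) (auto simp: mono_last_def)
  ultimately show ?thesis
    by (simp add: sum.Plus sum_negf sum_distrib_left[symmetric] algebra_simps)
qed

text \<open>Non-resonance enters only through \<alpha> i \<noteq> \<beta> j.\<close>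

locale hypergeometric_exponents =
  fixes n m :: nat and \<alpha> \<beta> :: "nat \<Rightarrow> real"
  assumes m_le_n: "m \<le> n" and n_pos: "1 \<le> n"
    and alpha_range: "\<And>i. i \<in> {1..n} \<Longrightarrow> 0 \<le> \<alpha> i \<and> \<alpha> i < 1"
    and beta_range: "\<And>j. j \<in> {1..m} \<Longrightarrow> 0 \<le> \<beta> j \<and> \<beta> j < 1"
    and alpha_mono: "mono_on {1..n} \<alpha>" and beta_mono: "mono_on {1..m} \<beta>"
    and alpha_1: "\<alpha> 1 = 0"
    and alpha_neq_beta: "\<And>i j. i \<in> {1..n} \<Longrightarrow> j \<in> {1..m} \<Longrightarrow> \<alpha> i \<noteq> \<beta> j"
begin

abbreviation s :: "nat \<Rightarrow> nat" where
  "s \<equiv> s_idx n m \<alpha> \<beta>"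

lemma s_card: "r \<in> {1..m} \<Longrightarrow> s r = card {i\<in>{1..n}. \<alpha> i < \<beta> r}"
  by (simp add: s_idx_def)

lemma alpha_less_beta_iff: "i \<in> {1..n} \<Longrightarrow> j \<in> {1..m} \<Longrightarrow> \<alpha> i < \<beta> j \<longleftrightarrow> i \<le> s j"
  by (simp add: s_card mono_on_less_iff_le_card[OF alpha_mono])

lemma one_le_s: "r \<le> m \<Longrightarrow> 1 \<le> s r"
proof (cases "r = 0")
  case False
  moreover assume "r \<le> m"
  moreover have "\<alpha> 1 \<noteq> \<beta> r"
    using False \<open>r \<le> m\<close> n_pos by (intro alpha_neq_beta) auto
  ultimately show ?thesis
    using alpha_less_beta_iff[of 1 r] alpha_1 beta_range[of r] n_pos by force
qed (simp add: s_idx_def)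

lemma s_le_n:
  assumes "r \<le> m"
  shows "s r \<le> n"
proof (cases "r = 0")
  case False
  then have "s r = card {i\<in>{1..n}. \<alpha> i < \<beta> r}"
    using assms by (simp add: s_card)
  also have "\<dots> \<le> card {1..n}"
    by (rule card_mono) auto
  finally show ?thesis
    by simp
qed (use n_pos in \<open>simp add: s_idx_def\<close>)

lemma s_le_Suc_n: "r \<le> m + 1 \<Longrightarrow> s r \<le> n + 1"
  using s_le_n[of r] by (cases "r = m + 1") (auto simp: s_idx_def)

end

locale omega_index = hypergeometric_exponents +
  fixes r l :: nat
  assumes r_le_m: "r \<le> m" and l_pos: "1 \<le> l" and l_le: "l \<le> s (r + 1) - s r"
begin

abbreviation t :: nat where
  "t \<equiv> s r + l"

lemma two_le_t: "2 \<le> t"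
  using one_le_s[OF r_le_m] l_pos by simp

lemma t_le_s_Suc: "t \<le> s (r + 1)"
  using l_le l_pos by simp

lemma t_le_Suc_n: "t \<le> n + 1"
  using t_le_s_Suc s_le_Suc_n[of "r + 1"] r_le_m by simp

lemma r_eq_m_if_n_less_t: "n < t \<Longrightarrow> r = m"
  using t_le_s_Suc s_le_n[of "r + 1"] r_le_m by (cases "r = m") auto

lemma beta_less_alpha_t_iff:
  assumes "t \<le> n" "j \<in> {1..m}"
  shows "\<beta> j < \<alpha> t \<longleftrightarrow> j \<le> r"
proof
  assume "\<beta> j < \<alpha> t"
  show "j \<le> r"
  proof (rule ccontr)
    assume "\<not> j \<le> r"
    then have "\<alpha> t < \<beta> (r + 1)"
      using assms two_le_t t_le_s_Suc alpha_less_beta_iff[of t "r + 1"] by auto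
    also have "\<dots> \<le> \<beta> j"
      using \<open>\<not> j \<le> r\<close> assms(2) by (intro mono_onD[OF beta_mono]) auto
    finally show False
      using \<open>\<beta> j < \<alpha> t\<close> by simp
  qed
next
  assume "j \<le> r"
  then have "\<beta> j \<le> \<beta> r"
    using assms(2) r_le_m by (intro mono_onD[OF beta_mono]) auto
  also have "\<beta> r \<le> \<alpha> t"
    using assms \<open>j \<le> r\<close> two_le_t l_pos r_le_m alpha_less_beta_iff[of t r] by auto
  finally show "\<beta> j < \<alpha> t"
    using alpha_neq_beta[of t j] assms two_le_t by force
qed

lemma card_beta_less_alpha_t: "t \<le> n \<Longrightarrow> card {j\<in>{1..m}. \<beta> j < \<alpha> t} = r"
proof -
  assume "t \<le> n"
  then have "{j\<in>{1..m}. \<beta> j < \<alpha> t} = {1..r}"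
    using beta_less_alpha_t_iff r_le_m by auto
  then show ?thesis
    by simp
qed

text \<open>The shift is the coefficient of prod y^d / prod x^d: coeff (Inl 1) = shift as \<alpha> 1 = 0.\<close>

definition shift :: real where
  "shift = (if t \<le> n then 1 - \<alpha> t else 0)"

definition coeff :: "nat + nat \<Rightarrow> real" where
  "coeff k = (case k of
      Inl i \<Rightarrow> \<alpha> i - of_bool (t \<le> i) + shift
    | Inr j \<Rightarrow> 1 - \<beta> j + of_bool (r < j) - shift)"

definition facet_normal :: "nat + nat \<Rightarrow> real" where
  "facet_normal x = (case x of Inl i \<Rightarrow> 1 - (real n - real m) * of_bool (i = t) | Inr j \<Rightarrow> 1)"

lemma shift_range: "0 \<le> shift" "shift \<le> 1"
  using alpha_range[of t] two_le_t by (auto simp: shift_def)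

lemma coeff_nonneg:
  assumes "k \<in> {1..n} <+> {1..m}"
  shows "0 \<le> coeff k"
proof (cases k)
  case (Inl i)
  with assms have i: "i \<in> {1..n}"
    by auto
  show ?thesis
  proof (cases "t \<le> i")
    case True
    with i have "\<alpha> t \<le> \<alpha> i"
      using two_le_t by (intro mono_onD[OF alpha_mono]) auto
    with True i Inl show ?thesis
      by (auto simp: coeff_def shift_def)
  next
    case False
    with Inl show ?thesis
      using alpha_range[OF i] shift_range by (auto simp: coeff_def)
  qed
next
  case (Inr j)
  with assms have j: "j \<in> {1..m}"
    by auto
  consider "r < j" | "j \<le> r" "t \<le> n" | "n < t"
    by linarith
  then show ?thesis
  proof cases
    case 1
    then show ?thesis
      using Inr beta_range[OF j] shift_range by (simp add: coeff_def)
  next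
    case 2
    then show ?thesis
      using Inr beta_less_alpha_t_iff[OF 2(2) j] by (simp add: coeff_def shift_def)
  next
    case 3
    then show ?thesis
      using Inr beta_range[OF j] by (simp add: coeff_def shift_def)
  qed
qed

lemma g_exp_eq_sum_vertex:
  "g_exp n m \<alpha> \<beta> d r l = (\<lambda>x. \<Sum>k\<in>{1..n} <+> {1..m}. coeff k * vertex n m d k x)"
proof
  fix x
  show "g_exp n m \<alpha> \<beta> d r l x = (\<Sum>k\<in>{1..n} <+> {1..m}. coeff k * vertex n m d k x)"
  proof (cases x)
    case (Inl i)
    then show ?thesis
      unfolding Inl sum_vertex_Inl using two_le_t alpha_1
      by (auto simp: g_exp_def coeff_def algebra_simps)
  next
    case (Inr j)
    then show ?thesis
      unfolding Inr sum_vertex_Inr[OF n_pos] using alpha_1 two_le_t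
      by (auto simp: g_exp_def coeff_def algebra_simps)
  qed
qed

lemma facet_normal_Inl_sum:
  "(\<Sum>i=2..n. facet_normal (Inl i)) = real n - 1 - (real n - real m) * of_bool (t \<le> n)"
  using two_le_t n_pos
  by (simp add: facet_normal_def sum_subtractf sum_distrib_left[symmetric] of_bool_def)

lemma facet_normal_le:
  assumes "v \<in> Newton_vertices n m d"
  shows "(\<Sum>x\<in>{2..n} <+> {1..m}. facet_normal x * v x) \<le> real d"
proof -
  from assms consider "v = (\<lambda>_. 0)" | i where "i \<in> {2..n}" "v = mono_x d i"
    | j where "j \<in> {1..m}" "v = mono_y d j" | "v = mono_last n m d"
    unfolding Newton_vertices_def by blast
  then show ?thesis
  proof cases
    case 2
    then show ?thesis
      unfolding 2(2) coord_sum_mono_x using mult_right_mono[of "real m" "real n" "real d"] m_le_n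
      by (simp add: facet_normal_def algebra_simps)
  next
    case 3
    then show ?thesis
      unfolding 3(2) coord_sum_mono_y by (simp add: facet_normal_def)
  next
    case 4
    then show ?thesis
      unfolding 4 coord_sum_mono_last facet_normal_Inl_sum
      using mult_left_mono[of "real m" "real n" "real d"] m_le_n
      by (simp add: facet_normal_def algebra_simps)
  qed simp
qed

lemma facet_normal_slack:
  assumes "k \<in> {1..n} <+> {1..m}"
  shows "coeff k = 0 \<or> (\<Sum>x\<in>{2..n} <+> {1..m}. facet_normal x * vertex n m d k x) = real d"
proof (cases k)
  case (Inl i)
  show ?thesis
  proof (cases "i = 1")
    case True
    have "t \<le> n \<or> t = n + 1"
      using t_le_Suc_n by linarith
    then show ?thesis
      unfolding Inl True vertex_Inl_1 coord_sum_mono_last facet_normal_Inl_sum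
      using alpha_1 two_le_t by (auto simp: coeff_def shift_def facet_normal_def algebra_simps)
  next
    case False
    with Inl assms show ?thesis
      unfolding Inl vertex_Inl[OF False] coord_sum_mono_x
      by (auto simp: coeff_def shift_def facet_normal_def)
  qed
next
  case (Inr j)
  with assms show ?thesis
    unfolding Inr vertex_Inr coord_sum_mono_y by (auto simp: facet_normal_def)
qed

lemma weight_eq_sum_coeff:
  assumes "0 < d"
  shows "weight n m \<alpha> \<beta> d r l = sum coeff ({1..n} <+> {1..m})"
  unfolding weight_def Newton_Delta_conv_hull_pts g_exp_eq_sum_vertex
proof (rule Inf_scaled_conv_hull_pts[where B = "real d" and X = "{2..n} <+> {1..m}" and \<phi> = facet_normal])
  show "finite (Newton_vertices n m d)" "(\<lambda>_. 0) \<in> Newton_vertices n m d"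
    by (simp_all add: Newton_vertices_def)
  show "\<forall>k\<in>{1..n} <+> {1..m}. 0 \<le> coeff k"
    using coeff_nonneg by blast
  show "\<forall>v\<in>Newton_vertices n m d. (\<Sum>x\<in>{2..n} <+> {1..m}. facet_normal x * v x) \<le> real d"
    using facet_normal_le by blast
  show "\<forall>k\<in>{1..n} <+> {1..m}.
      coeff k = 0 \<or> (\<Sum>x\<in>{2..n} <+> {1..m}. facet_normal x * vertex n m d k x) = real d"
    using facet_normal_slack by blast
qed (use assms vertex_in_Newton_vertices in auto)

lemma sum_coeff:
  "sum coeff ({1..n} <+> {1..m}) = (\<Sum>i=1..n. \<alpha> i) - (\<Sum>j=1..m. \<beta> j)
    - real (n + 1 - t) + real (m - r) + real m + (real n - real m) * shift"
proof -
  have "{1..n} \<inter> {i. t \<le> i} = {t..n}" "{1..m} \<inter> {j. r < j} = {r + 1..m}"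
    using two_le_t by auto
  then show ?thesis
    by (simp add: sum.Plus coeff_def sum.distrib sum_subtractf algebra_simps)
qed

lemma weight_eq_theta:
  assumes "0 < d"
  shows "real n + real m - 1 - weight n m \<alpha> \<beta> d r l = theta n m \<alpha> \<beta> t"
proof (cases "t \<le> n")
  case True
  then have "theta n m \<alpha> \<beta> t
      = (real n - real m) * \<alpha> t + real r + (real n - real t) - (\<Sum>i=1..n. \<alpha> i) + (\<Sum>j=1..m. \<beta> j)"
    unfolding theta_def theta0_def card_beta_less_alpha_t[OF True] by simp
  with True r_le_m show ?thesis
    unfolding weight_eq_sum_coeff[OF assms] sum_coeff by (simp add: shift_def algebra_simps)
next
  case False
  then have t: "t = n + 1" and r: "r = m"
    using t_le_Suc_n r_eq_m_if_n_less_t by auto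
  have "{j\<in>{1..m}. \<beta> j < 0} = {}"
    using beta_range by force
  then have "theta n m \<alpha> \<beta> t = real n - 1 - (\<Sum>i=1..n. \<alpha> i) + (\<Sum>j=1..m. \<beta> j)"
    unfolding t theta_def theta0_def alpha_1 by simp
  moreover have "shift = 0"
    using False by (simp add: shift_def)
  ultimately show ?thesis
    unfolding weight_eq_sum_coeff[OF assms] sum_coeff using t r by simp
qed

end

theorem lemma3p9:
  fixes n m d r l :: nat and \<alpha> \<beta> :: "nat \<Rightarrow> real"
  assumes "m \<le> n" and "1 \<le> n"
    and "\<forall>i\<in>{1..n}. \<alpha> i \<in> \<rat> \<and> 0 \<le> \<alpha> i \<and> \<alpha> i < 1"
    and "\<forall>j\<in>{1..m}. \<beta> j \<in> \<rat> \<and> 0 \<le> \<beta> j \<and> \<beta> j < 1"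
    and "\<forall>i\<in>{1..n}. \<forall>i'\<in>{1..n}. i \<le> i' \<longrightarrow> \<alpha> i \<le> \<alpha> i'"
    and "\<forall>j\<in>{1..m}. \<forall>j'\<in>{1..m}. j \<le> j' \<longrightarrow> \<beta> j \<le> \<beta> j'"
    and "\<alpha> 1 = 0"
    and "\<forall>i\<in>{1..n}. \<forall>j\<in>{1..m}. \<alpha> i - \<beta> j \<notin> \<int>"
    and "0 < d"
    and "\<forall>i\<in>{1..n}. real d * \<alpha> i \<in> \<int>"
    and "\<forall>j\<in>{1..m}. real d * \<beta> j \<in> \<int>"
    and "r \<le> m" and "1 \<le> l" and "l \<le> s_idx n m \<alpha> \<beta> (r + 1) - s_idx n m \<alpha> \<beta> r"
  shows "real n + real m - 1 - weight n m \<alpha> \<beta> d r l = theta n m \<alpha> \<beta> (s_idx n m \<alpha> \<beta> r + l)"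
proof -
  interpret omega_index n m \<alpha> \<beta> r l
  proof
    show "\<alpha> i \<noteq> \<beta> j" if "i \<in> {1..n}" "j \<in> {1..m}" for i j
      using assms(8) that by fastforce
  qed (use assms in \<open>auto simp: mono_on_def\<close>)
  show ?thesis
    using weight_eq_theta[OF assms(9)] .
qed

end
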